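(* Let $X$ be a quandle. The following are equivalent: (1) $X$ is a kei; (2) the identity map of $X$ is a good involution; (3) $X$ has a good involution which is a quandle homomorphism; (4) every good involution of $X$ is a quandle homomorphism, and $X$ has at least one good involution.
   Context: A quandle is a set $X$ with a binary operation $(x,y)\mapsto x^y$ such that $x^x=x$; for all $x,y$ there is a unique $z$ with $z^y=x$ (written $x^{y^{-1}}$); and $(x^y)^z=(x^z)^{(y^z)}$. A kei is a quandle with $(x^y)^y=x$ for all $x,y$ (equivalently $x^y=x^{y^{-1}}$). A good involution is a map $\rho:X\to X$ with $\rho\circ\rho={\rm id}$, $\rho(x^y)=\rho(x)^y$ and $x^{\rho(y)}=x^{y^{-1}}$ for all $x,y$. A quandle homomorphism is a map $f$ with $f(x^y)=f(x)^{f(y)}$. *)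

theory Defs
  imports Main
begin

text \<open>A quandle on a carrier set X with operation op, where op x y stands for x^y.\<close>

definition quandle :: "'a set \<Rightarrow> ('a \<Rightarrow> 'a \<Rightarrow> 'a) \<Rightarrow> bool" where
  "quandle X op \<longleftrightarrow>
     (\<forall>x\<in>X. \<forall>y\<in>X. op x y \<in> X) \<and>
     (\<forall>x\<in>X. op x x = x) \<and>
     (\<forall>x\<in>X. \<forall>y\<in>X. \<exists>!z. z \<in> X \<and> op z y = x) \<and>
     (\<forall>x\<in>X. \<forall>y\<in>X. \<forall>z\<in>X. op (op x y) z = op (op x z) (op y z))"

text \<open>x^(y^-1): the unique z in X with z^y = x.\<close>
definition qinv :: "'a set \<Rightarrow> ('a \<Rightarrow> 'a \<Rightarrow> 'a) \<Rightarrow> 'a \<Rightarrow> 'a \<Rightarrow> 'a" where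
  "qinv X op x y = (THE z. z \<in> X \<and> op z y = x)"

definition kei :: "'a set \<Rightarrow> ('a \<Rightarrow> 'a \<Rightarrow> 'a) \<Rightarrow> bool" where
  "kei X op \<longleftrightarrow> quandle X op \<and> (\<forall>x\<in>X. \<forall>y\<in>X. op (op x y) y = x)"

definition good_involution :: "'a set \<Rightarrow> ('a \<Rightarrow> 'a \<Rightarrow> 'a) \<Rightarrow> ('a \<Rightarrow> 'a) \<Rightarrow> bool" where
  "good_involution X op \<rho> \<longleftrightarrow>
     (\<forall>x\<in>X. \<rho> x \<in> X) \<and>
     (\<forall>x\<in>X. \<rho> (\<rho> x) = x) \<and>
     (\<forall>x\<in>X. \<forall>y\<in>X. \<rho> (op x y) = op (\<rho> x) y) \<and>
     (\<forall>x\<in>X. \<forall>y\<in>X. op x (\<rho> y) = qinv X op x y)"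

definition quandle_hom :: "'a set \<Rightarrow> ('a \<Rightarrow> 'a \<Rightarrow> 'a) \<Rightarrow> 'b set \<Rightarrow> ('b \<Rightarrow> 'b \<Rightarrow> 'b) \<Rightarrow> ('a \<Rightarrow> 'b) \<Rightarrow> bool" where
  "quandle_hom X op Y op' f \<longleftrightarrow>
     (\<forall>x\<in>X. f x \<in> Y) \<and> (\<forall>x\<in>X. \<forall>y\<in>X. f (op x y) = op' (f x) (f y))"

end

theory Submission
  imports Defs
begin

text \<open>
  The identity is a good involution exactly when right multiplication by every y is its
  own inverse, which is the kei axiom. If it is, every good involution \<rho> satisfies
  \<rho>(x^y) = (\<rho> x)^y = (\<rho> x)^(y^-1) = (\<rho> x)^(\<rho> y), so \<rho> is a homomorphism. Conversely,
  if a good involution \<rho> is a homomorphism, then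
  x^(\<rho> y) = \<rho>(\<rho> x)^(\<rho> y) = \<rho>((\<rho> x)^y) = x^y, so x^y = x^(y^-1) and the identity
  is a good involution.
\<close>

lemma quandle_op_closed:
  assumes "quandle X op" "x \<in> X" "y \<in> X"
  shows "op x y \<in> X"
  using assms unfolding quandle_def by blast

lemma qinv_eq_iff:
  assumes "quandle X op" "x \<in> X" "y \<in> X" "z \<in> X"
  shows "qinv X op x y = z \<longleftrightarrow> op z y = x"
proof -
  from assms have uniq: "\<exists>!z. z \<in> X \<and> op z y = x" unfolding quandle_def by blast
  then have "qinv X op x y \<in> X \<and> op (qinv X op x y) y = x"
    unfolding qinv_def by (rule theI')
  with uniq \<open>z \<in> X\<close> show ?thesis by blast
qed

lemma good_involution_id_iff:
  "good_involution X op id \<longleftrightarrow> (\<forall>x\<in>X. \<forall>y\<in>X. op x y = qinv X op x y)"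
  unfolding good_involution_def by simp

lemma kei_iff_good_involution_id:
  assumes "quandle X op"
  shows "kei X op \<longleftrightarrow> good_involution X op id"
  using assms qinv_eq_iff[OF assms] quandle_op_closed[OF assms]
  unfolding kei_def good_involution_id_iff by metis

lemma quandle_hom_id:
  assumes "quandle X op"
  shows "quandle_hom X op X op id"
  using quandle_op_closed[OF assms] unfolding quandle_hom_def by simp

lemma good_involution_quandle_hom_if_id:
  assumes id_good: "good_involution X op id" and \<rho>: "good_involution X op \<rho>"
  shows "quandle_hom X op X op \<rho>"
proof -
  have "\<rho> (op x y) = op (\<rho> x) (\<rho> y)" if x: "x \<in> X" and y: "y \<in> X" for x y
  proof -
    have \<rho>x: "\<rho> x \<in> X" using \<rho> x unfolding good_involution_def by blast
    have "\<rho> (op x y) = op (\<rho> x) y" using \<rho> x y unfolding good_involution_def by blast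
    also have "\<dots> = qinv X op (\<rho> x) y" using id_good \<rho>x y unfolding good_involution_id_iff by blast
    also have "\<dots> = op (\<rho> x) (\<rho> y)" using \<rho> \<rho>x y unfolding good_involution_def by metis
    finally show ?thesis .
  qed
  then show ?thesis using \<rho> unfolding quandle_hom_def good_involution_def by blast
qed

lemma good_involution_id_if_quandle_hom:
  assumes \<rho>: "good_involution X op \<rho>" and hom: "quandle_hom X op X op \<rho>"
  shows "good_involution X op id"
  unfolding good_involution_id_iff
proof (intro ballI)
  fix x y assume x: "x \<in> X" and y: "y \<in> X"
  have \<rho>x: "\<rho> x \<in> X" and \<rho>\<rho>x: "\<rho> (\<rho> x) = x" using \<rho> x unfolding good_involution_def by blast+
  have "op x (\<rho> y) = \<rho> (op (\<rho> x) y)" using hom \<rho>x y \<rho>\<rho>x unfolding quandle_hom_def by metis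
  also have "\<dots> = op x y" using \<rho> \<rho>x y \<rho>\<rho>x unfolding good_involution_def by metis
  finally show "op x y = qinv X op x y" using \<rho> x y unfolding good_involution_def by metis
qed

theorem proposition3p4:
  fixes X :: "'a set" and op :: "'a \<Rightarrow> 'a \<Rightarrow> 'a"
  assumes "quandle X op"
  shows "(kei X op \<longleftrightarrow> good_involution X op id)
       \<and> (good_involution X op id \<longleftrightarrow>
            (\<exists>\<rho>. good_involution X op \<rho> \<and> quandle_hom X op X op \<rho>))
       \<and> ((\<exists>\<rho>. good_involution X op \<rho> \<and> quandle_hom X op X op \<rho>) \<longleftrightarrow>
            ((\<forall>\<rho>. good_involution X op \<rho> \<longrightarrow> quandle_hom X op X op \<rho>)
             \<and> (\<exists>\<rho>. good_involution X op \<rho>)))"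
  using kei_iff_good_involution_id[OF assms] quandle_hom_id[OF assms]
    good_involution_quandle_hom_if_id good_involution_id_if_quandle_hom
  by blast

end
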